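(* Let $\mathcal{I}$ be a metric space, $d\ge1$, $\boldsymbol{S}\colon\mathcal{I}\to\mathbb{C}^{d\times d}$, $i\mapsto S_i$, continuous, and let $\varLambda\subset\varSigma_{\mathcal{I}}^+$ be a nonempty compact set invariant under the one-sided shift $\theta_+$. Put $\boldsymbol{S}^+_{\upharpoonright\varLambda}(0)=\{\mathrm{Id}_{\mathbb{C}^d}\}$, $\boldsymbol{S}^+_{\upharpoonright\varLambda}(\ell)=\{S_{i_\ell}\cdots S_{i_1}: i(\cdot)\in\varLambda\}$ for $\ell\ge1$, and $\boldsymbol{S}^+_{\upharpoonright\varLambda}=\bigcup_{\ell\ge0}\boldsymbol{S}^+_{\upharpoonright\varLambda}(\ell)$. Then $S_{i_n}\cdots S_{i_1}\to\mathbf{0}_{d\times d}$ as $n\to\infty$ for every $i(\cdot)\in\varLambda$ if and only if both (1) there is $\beta>0$ with $\|A\|_2\le\beta$ for all $A\in\boldsymbol{S}^+_{\upharpoonright\varLambda}$, and (2) there exist a constant $\gamma$ with $0<\gamma<1$ and an integer $N\ge1$ such that $\rho(A)\le\gamma$ for all $A\in\boldsymbol{S}^+_{\upharpoonright\varLambda}(\ell)$ and all $\ell\ge N$.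
   Context: $\varSigma_{\mathcal{I}}^+$ is the set of sequences $i(\cdot)=(i_n)_{n\ge1}$ in $\mathcal{I}$ with the product topology, $\theta_+$ the shift $(i_n)_{n\ge1}\mapsto(i_{n+1})_{n\ge1}$. $\|\cdot\|_2$ is the matrix norm induced by the Euclidean norm on $\mathbb{C}^d$, and $\rho(A)$ is the spectral radius. *)

theory Defs
  imports "HOL-Analysis.Analysis"
begin

text \<open>Sequences i(.) = (i_n)_{n>=1} are represented as functions nat => 'i,
  with index 0 standing for i_1.  The type nat => 'i carries the product topology
  (instance from Function_Topology).\<close>

definition shift_plus :: "(nat \<Rightarrow> 'i) \<Rightarrow> (nat \<Rightarrow> 'i)" where
  "shift_plus i = (\<lambda>n. i (Suc n))"

fun mprod :: "('i \<Rightarrow> complex^'n^'n) \<Rightarrow> (nat \<Rightarrow> 'i) \<Rightarrow> nat \<Rightarrow> complex^'n^'n" where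
  "mprod S i 0 = mat 1"
| "mprod S i (Suc n) = S (i n) ** mprod S i n"

definition Splus :: "('i \<Rightarrow> complex^'n^'n) \<Rightarrow> (nat \<Rightarrow> 'i) set \<Rightarrow> nat \<Rightarrow> (complex^'n^'n) set" where
  "Splus S \<Lambda> l = (if l = 0 then {mat 1} else {mprod S i l | i. i \<in> \<Lambda>})"

definition Splus_all :: "('i \<Rightarrow> complex^'n^'n) \<Rightarrow> (nat \<Rightarrow> 'i) set \<Rightarrow> (complex^'n^'n) set" where
  "Splus_all S \<Lambda> = (\<Union>l. Splus S \<Lambda> l)"

definition norm2 :: "complex^'n^'n \<Rightarrow> real" where
  "norm2 A = onorm (\<lambda>x::complex^'n. A *v x)"

definition spectral_radius :: "complex^'n^'n \<Rightarrow> real" where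
  "spectral_radius A = Max {cmod c | c. \<exists>v::complex^'n. v \<noteq> 0 \<and> A *v v = c *s v}"

end

(*
  If every product tends to 0, compactness of the set of sequences gives a uniform M such that
  every sequence contracts its product below 1/2 within M steps; together with a uniform bound K
  on the factors this yields the uniform decay norm2 (S (i n) ... S (i 1)) <= K^M 2^-(n div M),
  hence boundedness, and the spectral bound through spectral_radius <= norm2.

  Conversely, if some product sequence does not tend to 0, pick times m k with gaps at least N
  along which the products converge to P0 <> 0, and let Q k be the product carrying time m k to
  time m (k + 1).  A limit Q0 of the Q k satisfies Q0 P0 = P0, so 1 is an eigenvalue of Q0.  But
  |det (I - Q k)| = prod |1 - lambda| >= (1 - gamma)^d, since all eigenvalues of Q k lie in the
  disc of radius gamma, and this lower bound passes to det (I - Q0) by continuity.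
*)

theory Submission
  imports Defs "Jordan_Normal_Form.Spectral_Radius"
begin

no_notation Matrix.vec_index (infixl "$" 100)
hide_const (open) Matrix.mat Matrix.vec Matrix.row Matrix.col Determinant.det
  Spectral_Radius.spectral_radius

lemma norm2_nonneg: "0 \<le> norm2 A"
  unfolding norm2_def by (rule onorm_pos_le[OF matrix_vector_mul_bounded_linear])

lemma norm_matrix_vector_mult_le: "norm (A *v x) \<le> norm2 A * norm x"
  unfolding norm2_def by (rule onorm[OF matrix_vector_mul_bounded_linear])

lemma norm2_mat_1_le: "norm2 (mat 1 :: complex^'n^'n) \<le> 1"
  unfolding norm2_def by (rule onorm_le) simp

lemma norm2_matrix_mult_le: "norm2 (A ** B) \<le> norm2 A * norm2 B"
proof -
  have "(\<lambda>x. (A ** B) *v x) = (\<lambda>x. A *v x) \<circ> (\<lambda>x. B *v x)"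
    by (auto simp: matrix_vector_mul_assoc)
  then show ?thesis
    unfolding norm2_def
    using onorm_compose[OF matrix_vector_mul_bounded_linear matrix_vector_mul_bounded_linear]
    by simp
qed

lemma norm2_le_add_norm2_diff: "norm2 A \<le> norm2 B + norm2 (A - B)"
proof -
  have "(\<lambda>x. A *v x) = (\<lambda>x. B *v x + (A - B) *v x)"
    by (auto simp: matrix_vector_mult_diff_rdistrib)
  then show ?thesis
    unfolding norm2_def
    using onorm_triangle[OF matrix_vector_mul_bounded_linear matrix_vector_mul_bounded_linear]
    by simp
qed

lemma norm_entry_le_norm2: "norm (A $ i $ j) \<le> norm2 A"
proof -
  have "A $ i $ j = (A *v axis j 1) $ i"
    by (simp add: matrix_vector_mult_def axis_def if_distrib cong: if_cong)
  also have "norm \<dots> \<le> norm (A *v axis j 1)"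
    by (rule Finite_Cartesian_Product.norm_nth_le)
  also have "\<dots> \<le> norm2 A"
    using norm_matrix_vector_mult_le[of A "axis j 1"] by (simp add: norm_Basis)
  finally show ?thesis .
qed

lemma norm_le_norm2: "norm (A :: complex^'n^'n) \<le> real CARD('n) * real CARD('n) * norm2 A"
proof -
  have "norm A \<le> (\<Sum>i\<in>UNIV. norm (A $ i))"
    by (simp add: norm_vec_def L2_set_le_sum)
  also have "\<dots> \<le> (\<Sum>i\<in>UNIV. \<Sum>j\<in>UNIV. norm (A $ i $ j))"
    by (intro sum_mono) (simp add: norm_vec_def L2_set_le_sum)
  also have "\<dots> \<le> (\<Sum>i\<in>(UNIV::'n set). \<Sum>j\<in>(UNIV::'n set). norm2 A)"
    by (intro sum_mono norm_entry_le_norm2)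
  finally show ?thesis
    by simp
qed

lemma norm2_le_norm: "norm2 (A :: complex^'n^'n) \<le> real CARD('n) * real CARD('n) * norm A"
  unfolding norm2_def
proof (rule onorm_le)
  fix x :: "complex^'n"
  have "norm (A *v x) \<le> (\<Sum>i\<in>UNIV. norm ((A *v x) $ i))"
    by (simp add: norm_vec_def L2_set_le_sum)
  also have "\<dots> \<le> (\<Sum>i\<in>UNIV. \<Sum>j\<in>UNIV. norm (A $ i $ j * x $ j))"
    unfolding matrix_vector_mult_def by (intro sum_mono) (simp add: norm_sum)
  also have "\<dots> \<le> (\<Sum>i\<in>(UNIV::'n set). \<Sum>j\<in>(UNIV::'n set). norm A * norm x)"
  proof (intro sum_mono)
    fix i j
    have "norm (A $ i $ j) \<le> norm A"
      using Finite_Cartesian_Product.norm_nth_le[of "A $ i" j] Finite_Cartesian_Product.norm_nth_le[of A i]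
      by linarith
    then show "norm (A $ i $ j * x $ j) \<le> norm A * norm x"
      by (simp add: norm_mult mult_mono Finite_Cartesian_Product.norm_nth_le)
  qed
  finally show "norm (A *v x) \<le> real CARD('n) * real CARD('n) * norm A * norm x"
    by simp
qed

lemma norm2_zero [simp]: "norm2 (0 :: complex^'n^'n) = 0"
  using norm2_le_norm[of "0 :: complex^'n^'n"] norm2_nonneg[of "0 :: complex^'n^'n"] by simp

lemma continuous_on_norm2: "continuous_on UNIV (norm2 :: complex^'n^'n \<Rightarrow> real)"
proof (rule lipschitz_on_continuous_on)
  show "(real CARD('n) * real CARD('n))-lipschitz_on UNIV (norm2 :: complex^'n^'n \<Rightarrow> real)"
  proof (rule lipschitz_onI)
    fix A B :: "complex^'n^'n"
    show "dist (norm2 A) (norm2 B) \<le> real CARD('n) * real CARD('n) * dist A B"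
      using norm2_le_add_norm2_diff[of A B] norm2_le_add_norm2_diff[of B A]
        norm2_le_norm[of "A - B"] norm2_le_norm[of "B - A"]
      by (simp add: dist_real_def dist_norm norm_minus_commute abs_le_iff)
  qed simp
qed

subsection \<open>Eigenvalues via the characteristic polynomial\<close>

text \<open>Matrices indexed by a finite type are transferred to the nat-indexed matrices of
  Jordan_Normal_Form, where characteristic polynomials are available.\<close>

definition to_index :: "'n::finite \<Rightarrow> nat" where
  "to_index = (SOME f. bij_betw f UNIV {..<CARD('n)})"

definition from_index :: "nat \<Rightarrow> 'n::finite" where
  "from_index = inv_into UNIV to_index"

lemma bij_betw_to_index: "bij_betw (to_index :: 'n::finite \<Rightarrow> nat) UNIV {..<CARD('n)}"
proof -
  obtain f :: "'n \<Rightarrow> nat" where "bij_betw f UNIV {..<CARD('n)}"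
    using finite_same_card_bij[of "UNIV::'n set" "{..<CARD('n)}"] by auto
  then show ?thesis
    unfolding to_index_def by (metis someI_ex)
qed

lemma from_index_to_index [simp]: "from_index (to_index j) = j"
  unfolding from_index_def by (rule bij_betw_inv_into_left[OF bij_betw_to_index UNIV_I])

lemma to_index_less [simp]: "to_index (j :: 'n::finite) < CARD('n)"
  using bij_betwE[OF bij_betw_to_index] by blast

lemma to_index_from_index [simp]: "i < CARD('n) \<Longrightarrow> to_index (from_index i :: 'n::finite) = i"
  unfolding from_index_def by (rule bij_betw_inv_into_right[OF bij_betw_to_index]) simp

lemma bij_betw_from_index: "bij_betw (from_index :: nat \<Rightarrow> 'n::finite) {..<CARD('n)} UNIV"
  unfolding from_index_def using bij_betw_to_index by (rule bij_betw_inv_into)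

definition to_mat :: "'a^'n^'n \<Rightarrow> 'a mat" where
  "to_mat A = Matrix.mat CARD('n) CARD('n) (\<lambda>(i, j). A $ from_index i $ from_index j)"

definition to_vec :: "'a^'n \<Rightarrow> 'a vec" where
  "to_vec v = Matrix.vec CARD('n) (\<lambda>i. v $ from_index i)"

lemma to_mat_carrier [simp]: "to_mat (A :: 'a^'n^'n) \<in> carrier_mat CARD('n) CARD('n)"
  unfolding to_mat_def by simp

lemma dim_to_mat [simp]:
  "dim_row (to_mat (A :: 'a^'n^'n)) = CARD('n)" "dim_col (to_mat (A :: 'a^'n^'n)) = CARD('n)"
  unfolding to_mat_def by simp_all

lemma to_vec_carrier [simp]: "to_vec (v :: 'a^'n) \<in> carrier_vec CARD('n)"
  unfolding to_vec_def by simp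

lemma to_vec_index [simp]: "Matrix.vec_index (to_vec v) (to_index j) = v $ j"
  unfolding to_vec_def by simp

lemma to_vec_inject: "to_vec v = to_vec w \<longleftrightarrow> v = w"
  by (metis to_vec_index Finite_Cartesian_Product.vec_eq_iff)

lemma to_vec_zero: "to_vec (0 :: 'a::zero^'n) = 0\<^sub>v CARD('n)"
  by (rule eq_vecI) (simp_all add: to_vec_def)

lemma to_vec_smult: "to_vec (c *s v) = c \<cdot>\<^sub>v to_vec v"
  by (rule eq_vecI) (simp_all add: to_vec_def)

lemma to_vec_surj:
  assumes "w \<in> carrier_vec CARD('n)"
  shows "to_vec (\<chi> j :: 'n::finite. Matrix.vec_index w (to_index j)) = w"
  using assms by (intro eq_vecI) (simp_all add: to_vec_def)

lemma to_mat_mult_to_vec: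
  fixes A :: "'a::comm_semiring_1^'n^'n"
  shows "to_mat A *\<^sub>v to_vec v = to_vec (A *v v)"
proof (rule eq_vecI)
  fix i assume "i < dim_vec (to_vec (A *v v))"
  then have i: "i < CARD('n)"
    by (simp add: to_vec_def)
  have "Matrix.vec_index (to_mat A *\<^sub>v to_vec v) i
      = (\<Sum>k\<in>{..<CARD('n)}. A $ from_index i $ from_index k * v $ from_index k)"
    using i by (simp add: scalar_prod_def to_mat_def to_vec_def atLeast0LessThan)
  also have "\<dots> = (\<Sum>j\<in>UNIV. A $ from_index i $ j * v $ j)"
    by (rule sum.reindex_bij_betw[OF bij_betw_from_index])
  also have "\<dots> = Matrix.vec_index (to_vec (A *v v)) i"
    using i by (simp add: to_vec_def matrix_vector_mult_def)
  finally show "Matrix.vec_index (to_mat A *\<^sub>v to_vec v) i = Matrix.vec_index (to_vec (A *v v)) i" .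
qed (simp add: to_mat_def to_vec_def)

definition eigenvalues :: "complex^'n^'n \<Rightarrow> complex set" where
  "eigenvalues A = {c. \<exists>v. v \<noteq> 0 \<and> A *v v = c *s v}"

lemma eigenvalue_to_mat_iff:
  fixes A :: "complex^'n^'n"
  shows "eigenvalue (to_mat A) c \<longleftrightarrow> c \<in> eigenvalues A"
proof
  assume "c \<in> eigenvalues A"
  then obtain v where "v \<noteq> 0" "A *v v = c *s v"
    unfolding eigenvalues_def by auto
  then show "eigenvalue (to_mat A) c"
    unfolding eigenvalue_def eigenvector_def
    by (intro exI[of _ "to_vec v"])
      (auto simp: to_mat_mult_to_vec to_vec_smult to_vec_inject simp flip: to_vec_zero)
next
  assume "eigenvalue (to_mat A) c"
  then obtain w where w: "w \<in> carrier_vec CARD('n)" "w \<noteq> 0\<^sub>v CARD('n)"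
    "to_mat A *\<^sub>v w = c \<cdot>\<^sub>v w"
    unfolding eigenvalue_def eigenvector_def by auto
  define v where "v = (\<chi> j :: 'n. Matrix.vec_index w (to_index j))"
  have "to_vec v = w"
    unfolding v_def by (rule to_vec_surj[OF w(1)])
  with w show "c \<in> eigenvalues A"
    unfolding eigenvalues_def
    by (auto intro!: exI[of _ v] simp: to_vec_zero to_vec_inject[symmetric]
        to_mat_mult_to_vec[symmetric] to_vec_smult)
qed

lemma eigenvalues_eq_spectrum: "eigenvalues A = spectrum (to_mat A)"
  unfolding spectrum_def eigenvalue_to_mat_iff by simp

lemma spectral_radius_eq_Max: "spectral_radius A = Max (cmod ` eigenvalues A)"
  unfolding Defs.spectral_radius_def eigenvalues_def by (rule arg_cong[where f = Max]) auto

lemma finite_eigenvalues: "finite (eigenvalues A)"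
  unfolding eigenvalues_eq_spectrum by (rule card_finite_spectrum(1)[OF to_mat_carrier])

lemma eigenvalues_nonempty: "eigenvalues A \<noteq> {}"
  unfolding eigenvalues_eq_spectrum by (rule spectrum_non_empty[OF to_mat_carrier]) simp

lemma spectral_radius_le_iff: "spectral_radius A \<le> x \<longleftrightarrow> (\<forall>c\<in>eigenvalues A. cmod c \<le> x)"
  using finite_eigenvalues[of A] eigenvalues_nonempty[of A]
  by (simp add: spectral_radius_eq_Max)

lemma norm_eigenvalue_le_norm2:
  assumes "c \<in> eigenvalues A"
  shows "cmod c \<le> norm2 A"
proof -
  obtain v where v: "v \<noteq> 0" "A *v v = c *s v"
    using assms unfolding eigenvalues_def by auto
  have "cmod c * norm v \<le> norm2 A * norm v"
    using norm_matrix_vector_mult_le[of A v] v(2)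
    by (simp add: norm_vec_def norm_mult L2_set_right_distrib)
  then show ?thesis
    using v(1) by simp
qed

lemma spectral_radius_le_norm2: "spectral_radius A \<le> norm2 A"
  using norm_eigenvalue_le_norm2 spectral_radius_le_iff by blast

lemma one_eigenvalue_if_fixes_nonzero:
  assumes "Q ** P = P" "P \<noteq> 0"
  shows "1 \<in> eigenvalues Q"
proof -
  obtain a b where "P $ a $ b \<noteq> 0"
    using assms(2) by (metis Finite_Cartesian_Product.vec_eq_iff zero_index)
  moreover have "Q *v column b P = column b P"
    using arg_cong[OF assms(1), of "column b"]
    by (simp add: column_def matrix_matrix_mult_def matrix_vector_mult_def
        Finite_Cartesian_Product.vec_eq_iff)
  ultimately show ?thesis
    unfolding eigenvalues_def
    by (auto intro!: exI[of _ "column b P"] simp: column_def Finite_Cartesian_Product.vec_eq_iff)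
qed

text \<open>The value of the characteristic polynomial at 1 is det (I - Q), i.e. the product of
  1 - \<lambda> over the eigenvalues \<lambda> of Q counted with multiplicity.\<close>

definition det_one_minus :: "complex^'n^'n \<Rightarrow> complex" where
  "det_one_minus Q = poly (char_poly (to_mat Q)) 1"

lemma det_one_minus_eq_0: "1 \<in> eigenvalues Q \<Longrightarrow> det_one_minus Q = 0"
  unfolding det_one_minus_def eigenvalues_eq_spectrum spectrum_root_char_poly[OF to_mat_carrier]
  by simp

lemma prod_list_one_minus_lower_bound:
  assumes "\<forall>a\<in>set as. cmod a \<le> \<gamma>" "\<gamma> \<le> 1"
  shows "(1 - \<gamma>) ^ length as \<le> cmod (\<Prod>a\<leftarrow>as. 1 - a)"
  using assms
proof (induction as)
  case (Cons a as)
  have "1 - \<gamma> \<le> cmod (1 - a)"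
    using Cons.prems norm_triangle_ineq2[of 1 a] by simp
  with Cons show ?case
    by (simp add: norm_mult mult_mono)
qed simp

lemma det_one_minus_lower_bound:
  assumes "spectral_radius (Q :: complex^'n^'n) \<le> \<gamma>" "\<gamma> \<le> 1"
  shows "(1 - \<gamma>) ^ CARD('n) \<le> cmod (det_one_minus Q)"
proof -
  obtain as where as: "char_poly (to_mat Q) = (\<Prod>a\<leftarrow>as. [:- a, 1:])" "length as = CARD('n)"
    using char_poly_factorized[OF to_mat_carrier] by blast
  have "set as \<subseteq> eigenvalues Q"
    unfolding eigenvalues_eq_spectrum spectrum_root_char_poly[OF to_mat_carrier] as(1)
    by (auto simp: poly_prod_list prod_list_zero_iff)
  then have "\<forall>a\<in>set as. cmod a \<le> \<gamma>"
    using assms(1) spectral_radius_le_iff by blast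
  moreover have "det_one_minus Q = (\<Prod>a\<leftarrow>as. 1 - a)"
    unfolding det_one_minus_def as(1) by (simp add: poly_prod_list o_def)
  ultimately show ?thesis
    using prod_list_one_minus_lower_bound[OF _ assms(2)] as(2) by metis
qed

lemma tendsto_det_one_minus:
  assumes "(f \<longlongrightarrow> Q) F"
  shows "((\<lambda>x. det_one_minus (f x :: complex^'n^'n)) \<longlongrightarrow> det_one_minus Q) F"
proof -
  have leibniz: "det_one_minus A = (\<Sum>p\<in>{p. p permutes {0..<CARD('n)}}. signof p *
      (\<Prod>i = 0..<CARD('n). (if i = p i then 1 else 0) - A $ from_index i $ from_index (p i)))"
    for A :: "complex^'n^'n"
    unfolding det_one_minus_def char_poly_matrix[OF to_mat_carrier]
      det_def'[OF uminus_carrier_mat[OF char_matrix_closed[OF to_mat_carrier]]]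
    by (intro sum.cong refl arg_cong[where f = "\<lambda>x. signof _ * x"] prod.cong)
      (auto simp: char_matrix_def to_mat_def permutes_in_image)
  show ?thesis
    unfolding leibniz
    by (intro tendsto_intros tendsto_vec_nth assms)
qed

lemma limit_has_no_eigenvalue_one:
  fixes Q :: "'a \<Rightarrow> complex^'n^'n"
  assumes "(Q \<longlongrightarrow> Q0) F" "F \<noteq> bot" "\<gamma> < 1"
    and "eventually (\<lambda>x. spectral_radius (Q x) \<le> \<gamma>) F"
  shows "1 \<notin> eigenvalues Q0"
proof
  have "(1 - \<gamma>) ^ CARD('n) \<le> cmod (det_one_minus (Q x))" if "spectral_radius (Q x) \<le> \<gamma>" for x
    using that assms(3) by (intro det_one_minus_lower_bound) auto
  then have "(1 - \<gamma>) ^ CARD('n) \<le> cmod (det_one_minus Q0)"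
    by (intro tendsto_lowerbound[OF tendsto_norm[OF tendsto_det_one_minus[OF assms(1)]] _ assms(2)])
      (auto intro: eventually_mono[OF assms(4)])
  moreover assume "1 \<in> eigenvalues Q0"
  then have "det_one_minus Q0 = 0"
    by (rule det_one_minus_eq_0)
  moreover have "0 < (1 - \<gamma>) ^ CARD('n)"
    using assms(3) by simp
  ultimately show False
    by simp
qed

lemma shifted_in_shift_invariant:
  assumes "shift_plus ` \<Lambda> \<subseteq> \<Lambda>" "i \<in> \<Lambda>"
  shows "(\<lambda>k. i (n + k)) \<in> \<Lambda>"
proof -
  have "(shift_plus ^^ n) i \<in> \<Lambda>"
    by (induction n) (use assms in auto)
  moreover have "(shift_plus ^^ n) i = (\<lambda>k. i (n + k))"
    by (induction n) (auto simp: shift_plus_def)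
  ultimately show ?thesis
    by simp
qed

lemma mprod_add: "mprod S i (n + m) = mprod S (\<lambda>k. i (n + k)) m ** mprod S i n"
  by (induction m) (simp_all add: matrix_mul_assoc)

lemma mprod_in_Splus: "i \<in> \<Lambda> \<Longrightarrow> 0 < l \<Longrightarrow> mprod S i l \<in> Splus S \<Lambda> l"
  unfolding Splus_def by auto

lemma Splus_all_eq:
  assumes "\<Lambda> \<noteq> {}"
  shows "Splus_all S \<Lambda> = {mprod S i l | i l. i \<in> \<Lambda>}"
proof (intro subset_antisym subsetI)
  fix A assume "A \<in> Splus_all S \<Lambda>"
  then obtain l where "A \<in> Splus S \<Lambda> l"
    unfolding Splus_all_def by auto
  moreover obtain i where "i \<in> \<Lambda>"
    using assms by auto
  ultimately show "A \<in> {mprod S i l | i l. i \<in> \<Lambda>}"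
    unfolding Splus_def by (auto split: if_splits) (metis mprod.simps(1))
next
  fix A assume "A \<in> {mprod S i l | i l. i \<in> \<Lambda>}"
  then obtain i l where "i \<in> \<Lambda>" "A = mprod S i l"
    by auto
  then show "A \<in> Splus_all S \<Lambda>"
    unfolding Splus_all_def Splus_def by (cases "l = 0") auto
qed

lemma mprod_in_Splus_all: "i \<in> \<Lambda> \<Longrightarrow> mprod S i l \<in> Splus_all S \<Lambda>"
  using Splus_all_eq[of \<Lambda> S] by auto

lemma tendsto_matrix_mult:
  fixes f g :: "'a \<Rightarrow> 'b::real_normed_field^'n^'n"
  assumes "(f \<longlongrightarrow> A) F" "(g \<longlongrightarrow> B) F"
  shows "((\<lambda>x. f x ** g x) \<longlongrightarrow> A ** B) F"
  unfolding matrix_matrix_mult_def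
  by (intro tendsto_vec_lambda tendsto_sum tendsto_mult tendsto_vec_nth assms)

lemma continuous_on_mprod:
  assumes "continuous_on UNIV S"
  shows "continuous_on UNIV (\<lambda>i :: nat \<Rightarrow> 'i::topological_space. mprod S i n)"
proof (induction n)
  case (Suc n)
  have "continuous_on UNIV (\<lambda>i :: nat \<Rightarrow> 'i. S (i n))"
    by (rule continuous_on_compose2[OF assms continuous_on_product_coordinates]) auto
  with Suc show ?case
    by (auto simp: continuous_on_def intro: tendsto_matrix_mult)
qed simp

subsection \<open>Convergence implies uniform exponential decay\<close>

lemma uniform_contraction_time:
  fixes S :: "'i::topological_space \<Rightarrow> complex^'n^'n"
  assumes "continuous_on UNIV S" "compact \<Lambda>"
    and "\<forall>i\<in>\<Lambda>. (\<lambda>n. mprod S i n) \<longlonglongrightarrow> 0"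
  obtains M where "1 \<le> M" "\<And>i. i \<in> \<Lambda> \<Longrightarrow> \<exists>m\<in>{1..M}. norm2 (mprod S i m) < 1/2"
proof -
  define U where "U n = {i. norm2 (mprod S i n) < 1/2}" for n
  have "open (U n)" for n
    unfolding U_def
    by (intro open_Collect_less continuous_on_const
        continuous_on_compose2[OF continuous_on_norm2 continuous_on_mprod[OF assms(1)]]) auto
  moreover have "\<Lambda> \<subseteq> (\<Union>n\<in>{1..}. U n)"
  proof
    fix i assume "i \<in> \<Lambda>"
    have "isCont norm2 (0 :: complex^'n^'n)"
      by (metis continuous_on_norm2 continuous_on_eq_continuous_at open_UNIV UNIV_I)
    then have "(\<lambda>n. norm2 (mprod S i n)) \<longlonglongrightarrow> 0"
      using isCont_tendsto_compose assms(3) \<open>i \<in> \<Lambda>\<close> by fastforce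
    then have "eventually (\<lambda>n. 1 \<le> n \<and> norm2 (mprod S i n) < 1/2) sequentially"
      by (intro eventually_conj eventually_ge_at_top order_tendstoD(2)) auto
    then show "i \<in> (\<Union>n\<in>{1..}. U n)"
      unfolding U_def eventually_sequentially by auto
  qed
  ultimately obtain T where T: "T \<subseteq> {1..}" "finite T" "\<Lambda> \<subseteq> (\<Union>n\<in>T. U n)"
    using compactE_image[OF assms(2)] by metis
  show ?thesis
  proof (rule that[of "Max (insert 1 T)"])
    fix i assume "i \<in> \<Lambda>"
    then obtain n where "n \<in> T" "norm2 (mprod S i n) < 1/2"
      using T(3) unfolding U_def by auto
    with T show "\<exists>m\<in>{1..Max (insert 1 T)}. norm2 (mprod S i m) < 1/2"
      by (intro bexI[of _ n]) auto
  qed (simp add: T(2))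
qed

lemma norm2_factor_bound:
  fixes S :: "'i::topological_space \<Rightarrow> complex^'n^'n"
  assumes "continuous_on UNIV S" "compact \<Lambda>" "shift_plus ` \<Lambda> \<subseteq> \<Lambda>"
  obtains K where "1 \<le> K" "\<And>i k. i \<in> \<Lambda> \<Longrightarrow> norm2 (S (i k)) \<le> K"
proof -
  have "continuous_on UNIV (\<lambda>i :: nat \<Rightarrow> 'i. norm2 (S (i 0)))"
    by (intro continuous_on_compose2[OF continuous_on_norm2]
        continuous_on_compose2[OF assms(1) continuous_on_product_coordinates]) auto
  then have "compact ((\<lambda>i. norm2 (S (i 0))) ` \<Lambda>)"
    using assms(2) continuous_on_subset compact_continuous_image by blast
  then obtain K where "\<forall>x\<in>(\<lambda>i. norm2 (S (i 0))) ` \<Lambda>. norm x \<le> K"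
    using compact_imp_bounded bounded_iff by metis
  then have K: "norm2 (S (i 0)) \<le> K" if "i \<in> \<Lambda>" for i
    using that by fastforce
  show ?thesis
  proof (rule that[of "max 1 K"])
    fix i k assume "i \<in> \<Lambda>"
    then show "norm2 (S (i k)) \<le> max 1 K"
      using K[OF shifted_in_shift_invariant[OF assms(3), of i k]] by simp
  qed simp
qed

lemma norm2_mprod_le_power:
  assumes "\<And>k. norm2 (S (i k)) \<le> K"
  shows "norm2 (mprod S i n) \<le> K ^ n"
proof (induction n)
  case 0
  then show ?case
    using norm2_mat_1_le by simp
next
  case (Suc n)
  have "norm2 (mprod S i (Suc n)) \<le> norm2 (S (i n)) * norm2 (mprod S i n)"
    by (simp add: norm2_matrix_mult_le)
  also have "\<dots> \<le> K * K ^ n"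
    using assms Suc norm2_nonneg order_trans[OF norm2_nonneg assms] by (intro mult_mono) auto
  finally show ?case
    by simp
qed

lemma norm2_mprod_decay:
  assumes inv: "shift_plus ` \<Lambda> \<subseteq> \<Lambda>" and "i \<in> \<Lambda>"
    and "1 \<le> M" "1 \<le> K" "0 \<le> q" "q \<le> 1"
    and factor: "\<And>i k. i \<in> \<Lambda> \<Longrightarrow> norm2 (S (i k)) \<le> K"
    and contraction: "\<And>i. i \<in> \<Lambda> \<Longrightarrow> \<exists>m\<in>{1..M}. norm2 (mprod S i m) \<le> q"
  shows "norm2 (mprod S i n) \<le> K ^ M * q ^ (n div M)"
  using \<open>i \<in> \<Lambda>\<close>
proof (induction n arbitrary: i rule: less_induct)
  case (less n)
  show ?case
  proof (cases "n < M")
    case True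
    then have "norm2 (mprod S i n) \<le> K ^ M"
      using norm2_mprod_le_power[of S i K n] factor[OF less.prems] power_increasing[of n M K]
        \<open>1 \<le> K\<close>
      by force
    with True show ?thesis
      by simp
  next
    case False
    obtain m where m: "1 \<le> m" "m \<le> M" "norm2 (mprod S i m) \<le> q"
      using contraction[OF less.prems] by auto
    define j where "j = (\<lambda>k. i (m + k))"
    have "j \<in> \<Lambda>"
      unfolding j_def by (rule shifted_in_shift_invariant[OF inv less.prems])
    with m False have IH: "norm2 (mprod S j (n - m)) \<le> K ^ M * q ^ ((n - m) div M)"
      by (intro less.IH) auto
    have "n div M \<le> (n - m + M) div M"
      using m by (intro div_le_mono) simp
    also have "\<dots> = (n - m) div M + 1"
      using \<open>1 \<le> M\<close> by simp
    finally have exponent: "n div M \<le> (n - m) div M + 1" .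
    have "norm2 (mprod S i n) \<le> norm2 (mprod S j (n - m)) * norm2 (mprod S i m)"
      using mprod_add[of S i m "n - m"] False m norm2_matrix_mult_le by (simp add: j_def)
    also have "\<dots> \<le> K ^ M * q ^ ((n - m) div M) * q"
      using IH m(3) \<open>0 \<le> q\<close> \<open>1 \<le> K\<close> norm2_nonneg by (intro mult_mono) auto
    also have "\<dots> = K ^ M * q ^ ((n - m) div M + 1)"
      by (simp add: mult.assoc)
    also have "\<dots> \<le> K ^ M * q ^ (n div M)"
      using exponent \<open>0 \<le> q\<close> \<open>q \<le> 1\<close> \<open>1 \<le> K\<close>
      by (intro mult_left_mono power_decreasing) auto
    finally show ?thesis .
  qed
qed

lemma stable_imp_bounded_and_spectral_gap:
  fixes S :: "'i::topological_space \<Rightarrow> complex^'n^'n"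
  assumes "continuous_on UNIV S" "\<Lambda> \<noteq> {}" "compact \<Lambda>" "shift_plus ` \<Lambda> \<subseteq> \<Lambda>"
    and "\<forall>i\<in>\<Lambda>. (\<lambda>n. mprod S i n) \<longlonglongrightarrow> 0"
  obtains \<beta> N where "0 < \<beta>" "\<forall>A\<in>Splus_all S \<Lambda>. norm2 A \<le> \<beta>"
    and "1 \<le> N" "\<forall>l\<ge>N. \<forall>A\<in>Splus S \<Lambda> l. spectral_radius A \<le> 1/2"
proof -
  obtain M where M: "1 \<le> M" "\<And>i. i \<in> \<Lambda> \<Longrightarrow> \<exists>m\<in>{1..M}. norm2 (mprod S i m) < 1/2"
    using uniform_contraction_time[OF assms(1,3,5)] by blast
  obtain K where K: "1 \<le> K" "\<And>i k. i \<in> \<Lambda> \<Longrightarrow> norm2 (S (i k)) \<le> K"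
    using norm2_factor_bound[OF assms(1,3,4)] by blast
  define B where "B = K ^ M"
  have "1 \<le> B"
    unfolding B_def using K(1) by simp
  have decay: "norm2 (mprod S i n) \<le> B * (1/2) ^ (n div M)" if "i \<in> \<Lambda>" for i n
    unfolding B_def using M K that
    by (intro norm2_mprod_decay[OF assms(4)]) (auto, meson less_imp_le)
  have "norm2 A \<le> B" if A: "A \<in> Splus_all S \<Lambda>" for A
  proof -
    obtain i l where "i \<in> \<Lambda>" "A = mprod S i l"
      using A unfolding Splus_all_eq[OF assms(2)] by auto
    moreover have "B * (1/2) ^ (l div M) \<le> B"
      using \<open>1 \<le> B\<close> by (simp add: power_le_one mult_left_le)
    ultimately show ?thesis
      using decay order_trans by blast
  qed
  moreover obtain k where k: "(1/2 :: real) ^ k < 1 / (2 * B)"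
    using real_arch_pow_inv[of "1 / (2 * B)" "1/2"] \<open>1 \<le> B\<close> by auto
  have "spectral_radius A \<le> 1/2" if l: "M * k + 1 \<le> l" and A: "A \<in> Splus S \<Lambda> l" for l A
  proof -
    obtain i where "i \<in> \<Lambda>" "A = mprod S i l"
      using l A unfolding Splus_def by (auto split: if_splits)
    have "k \<le> l div M"
      using l \<open>1 \<le> M\<close>
      by (metis div_le_mono le_add1 le_trans nonzero_mult_div_cancel_left not_one_le_zero)
    then have "B * (1/2) ^ (l div M) \<le> B * (1/2) ^ k"
      using \<open>1 \<le> B\<close> by (intro mult_left_mono power_decreasing) auto
    also have "\<dots> \<le> 1/2"
      using k \<open>1 \<le> B\<close> by (simp add: field_simps)
    finally show ?thesis
      using spectral_radius_le_norm2[of A] decay[OF \<open>i \<in> \<Lambda>\<close>, of l]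
      unfolding \<open>A = mprod S i l\<close> by linarith
  qed
  ultimately show ?thesis
    using that[of B "M * k + 1"] \<open>1 \<le> B\<close> by auto
qed

subsection \<open>Spectral gap and boundedness imply convergence\<close>

lemma strict_mono_add_le:
  fixes r :: "nat \<Rightarrow> nat"
  assumes "strict_mono r"
  shows "r a + b \<le> r (a + b)"
proof (induction b)
  case (Suc b)
  then show ?case
    using strict_monoD[OF assms, of "a + b" "Suc (a + b)"] by simp
qed simp

lemma nonzero_limit_along_sparse_subsequence:
  fixes P :: "nat \<Rightarrow> 'a::{real_normed_vector, heine_borel}"
  assumes "\<not> P \<longlonglongrightarrow> 0" "bounded (range P)"
  obtains m L where "\<And>k. m k + N \<le> m (Suc k)" "(\<lambda>k. P (m k)) \<longlonglongrightarrow> L" "L \<noteq> 0"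
proof -
  obtain \<delta> where \<delta>: "0 < \<delta>" "\<not> eventually (\<lambda>n. norm (P n) < \<delta>) sequentially"
    using assms(1) by (auto simp: tendsto_iff)
  obtain s :: "nat \<Rightarrow> nat" where s: "strict_mono s" "\<forall>n. \<not> norm (P (s n)) < \<delta>"
    using not_eventually_sequentiallyD[OF \<delta>(2)] by blast
  have "bounded (range (P \<circ> s))"
    using assms(2) by (rule bounded_subset) auto
  then obtain r L where r: "strict_mono r" "(P \<circ> s \<circ> r) \<longlonglongrightarrow> L"
    using bounded_imp_convergent_subsequence by blast
  define m where "m k = s (r (Suc N * k))" for k
  have "strict_mono (s \<circ> r)"
    using s(1) r(1) by (rule strict_mono_o)
  then have "m k + N \<le> m (Suc k)" for k
    using strict_mono_add_le[of "s \<circ> r" "Suc N * k" "Suc N"] unfolding m_def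
    by (simp add: add.commute)
  moreover have "(\<lambda>k. P (m k)) \<longlonglongrightarrow> L"
    using LIMSEQ_subseq_LIMSEQ[OF r(2), of "\<lambda>k. Suc N * k"]
    by (simp add: m_def o_def strict_mono_def add_less_le_mono)
  moreover have "\<delta> \<le> norm L"
    using s(2) by (intro tendsto_lowerbound[OF tendsto_norm[OF r(2)]]) (auto simp: not_less)
  then have "L \<noteq> 0"
    using \<delta>(1) by auto
  ultimately show ?thesis
    by (rule that)
qed

lemma norm_mprod_le_if_Splus_all_bounded:
  fixes S :: "'i \<Rightarrow> complex^'n^'n"
  assumes "\<forall>A\<in>Splus_all S \<Lambda>. norm2 A \<le> \<beta>" "i \<in> \<Lambda>"
  shows "norm (mprod S i l) \<le> real CARD('n) * real CARD('n) * \<beta>"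
  using assms mprod_in_Splus_all norm_le_norm2[of "mprod S i l"]
  by (meson mult_left_mono of_nat_0_le_iff zero_le_mult_iff order_trans)

lemma bounded_and_spectral_gap_imp_stable:
  fixes S :: "'i \<Rightarrow> complex^'n^'n"
  assumes inv: "shift_plus ` \<Lambda> \<subseteq> \<Lambda>"
    and bounded: "\<forall>A\<in>Splus_all S \<Lambda>. norm2 A \<le> \<beta>"
    and "\<gamma> < 1" "1 \<le> N"
    and gap: "\<forall>l\<ge>N. \<forall>A\<in>Splus S \<Lambda> l. spectral_radius A \<le> \<gamma>"
    and "i \<in> \<Lambda>"
  shows "(\<lambda>n. mprod S i n) \<longlonglongrightarrow> 0"
proof (rule ccontr)
  note norm_bound = norm_mprod_le_if_Splus_all_bounded[OF bounded]
  assume "\<not> (\<lambda>n. mprod S i n) \<longlonglongrightarrow> 0"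
  moreover have "bounded (range (mprod S i))"
    unfolding bounded_iff using norm_bound[OF \<open>i \<in> \<Lambda>\<close>] by blast
  ultimately obtain m P0 where m: "\<And>k. m k + N \<le> m (Suc k)"
    and P0: "(\<lambda>k. mprod S i (m k)) \<longlonglongrightarrow> P0" "P0 \<noteq> 0"
    by (rule nonzero_limit_along_sparse_subsequence[where N = N]) blast
  define Q where "Q k = mprod S (\<lambda>t. i (m k + t)) (m (Suc k) - m k)" for k
  have Q_in: "(\<lambda>t. i (m k + t)) \<in> \<Lambda>" for k
    using inv \<open>i \<in> \<Lambda>\<close> by (rule shifted_in_shift_invariant)
  have step: "mprod S i (m (Suc k)) = Q k ** mprod S i (m k)" for k
    using mprod_add[of S i "m k" "m (Suc k) - m k"] m[of k] by (simp add: Q_def)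
  have Q_gap: "spectral_radius (Q k) \<le> \<gamma>" for k
  proof -
    have "N \<le> m (Suc k) - m k"
      using m[of k] by simp
    then show ?thesis
      using gap mprod_in_Splus[OF Q_in, of "m (Suc k) - m k" S k] \<open>1 \<le> N\<close>
      unfolding Q_def by simp
  qed
  have "bounded (range Q)"
    unfolding bounded_iff Q_def using norm_bound[OF Q_in] by blast
  then obtain r Q0 where r: "strict_mono r" "(Q \<circ> r) \<longlonglongrightarrow> Q0"
    using bounded_imp_convergent_subsequence by blast
  have "(\<lambda>k. Q (r k) ** mprod S i (m (r k))) \<longlonglongrightarrow> Q0 ** P0"
    using r(2) LIMSEQ_subseq_LIMSEQ[OF P0(1) r(1)]
    by (intro tendsto_matrix_mult) (simp_all add: o_def)
  moreover have "(\<lambda>k. Q (r k) ** mprod S i (m (r k))) \<longlonglongrightarrow> P0"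
    using LIMSEQ_subseq_LIMSEQ[OF LIMSEQ_Suc[OF P0(1)] r(1)] by (simp add: o_def step)
  ultimately have "Q0 ** P0 = P0"
    by (rule LIMSEQ_unique)
  then have "1 \<in> eigenvalues Q0"
    using P0(2) by (rule one_eigenvalue_if_fixes_nonzero)
  moreover have "1 \<notin> eigenvalues Q0"
    using r(2) \<open>\<gamma> < 1\<close> Q_gap
    by (intro limit_has_no_eigenvalue_one[of "Q \<circ> r"]) (auto intro: always_eventually)
  ultimately show False
    by contradiction
qed

theorem lemma3p1:
  fixes S :: "'i::metric_space \<Rightarrow> complex^'n^'n"
    and \<Lambda> :: "(nat \<Rightarrow> 'i) set"
  assumes "continuous_on UNIV S"
    and "\<Lambda> \<noteq> {}"
    and "compact \<Lambda>"
    and "shift_plus ` \<Lambda> \<subseteq> \<Lambda>"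
  shows "(\<forall>i\<in>\<Lambda>. (\<lambda>n. mprod S i n) \<longlonglongrightarrow> 0) \<longleftrightarrow>
         ((\<exists>\<beta>>0. \<forall>A\<in>Splus_all S \<Lambda>. norm2 A \<le> \<beta>) \<and>
          (\<exists>\<gamma> (N::nat). 0 < \<gamma> \<and> \<gamma> < 1 \<and> N \<ge> 1 \<and>
             (\<forall>l\<ge>N. \<forall>A\<in>Splus S \<Lambda> l. spectral_radius A \<le> \<gamma>)))"
proof
  assume "\<forall>i\<in>\<Lambda>. (\<lambda>n. mprod S i n) \<longlonglongrightarrow> 0"
  then obtain \<beta> N where "0 < \<beta>" "\<forall>A\<in>Splus_all S \<Lambda>. norm2 A \<le> \<beta>"
    and "1 \<le> N" "\<forall>l\<ge>N. \<forall>A\<in>Splus S \<Lambda> l. spectral_radius A \<le> 1/2"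
    by (rule stable_imp_bounded_and_spectral_gap[OF assms])
  then show "(\<exists>\<beta>>0. \<forall>A\<in>Splus_all S \<Lambda>. norm2 A \<le> \<beta>) \<and>
      (\<exists>\<gamma> (N::nat). 0 < \<gamma> \<and> \<gamma> < 1 \<and> N \<ge> 1 \<and>
         (\<forall>l\<ge>N. \<forall>A\<in>Splus S \<Lambda> l. spectral_radius A \<le> \<gamma>))"
    by (intro conjI exI[of _ \<beta>] exI[of _ "1/2 :: real"] exI[of _ N]) auto
next
  assume "(\<exists>\<beta>>0. \<forall>A\<in>Splus_all S \<Lambda>. norm2 A \<le> \<beta>) \<and>
      (\<exists>\<gamma> (N::nat). 0 < \<gamma> \<and> \<gamma> < 1 \<and> N \<ge> 1 \<and>
         (\<forall>l\<ge>N. \<forall>A\<in>Splus S \<Lambda> l. spectral_radius A \<le> \<gamma>))"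
  then show "\<forall>i\<in>\<Lambda>. (\<lambda>n. mprod S i n) \<longlonglongrightarrow> 0"
    using bounded_and_spectral_gap_imp_stable[OF assms(4)] by blast
qed

end
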